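(* If a $\star$-metric space $(X,d^\star)$ has a dense subset $M$ (dense in $(X,\mathscr{T}_{d^\star})$) such that $(M,d^\star|_{M\times M})$ is totally bounded, then $(X,d^\star)$ is totally bounded.
   Context: A $t$-definer is a function $\star:[0,\infty)\times[0,\infty)\to[0,\infty)$ such that for all $a,b,c\ge 0$: $a\star b=b\star a$; $a\star(b\star c)=(a\star b)\star c$; if $a\le b$ then $a\star c\le b\star c$; $a\star 0=a$; and $\star$ is continuous in its first variable with respect to the Euclidean topology. Given a nonempty set $X$ and a $t$-definer $\star$, a $\star$-metric on $X$ is a function $d^\star:X\times X\to[0,\infty)$ such that for all $x,y,z\in X$: $d^\star(x,y)=0$ iff $x=y$; $d^\star(x,y)=d^\star(y,x)$; and $d^\star(x,y)\le d^\star(x,z)\star d^\star(z,y)$. Let $\mathscr{T}_{d^\star}$ be the topology consisting of all $U\subseteq X$ such that for each $a\in U$ there is $r>0$ with $\{x: d^\star(a,x)<r\}\subseteq U$. A $\star$-metric space $(Y,\rho)$ is totally bounded if for every $\epsilon>0$ there is a finite $F\subseteq Y$ with $Y=\bigcup_{x\in F}\{y\in Y:\rho(x,y)<\epsilon\}$. *)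

theory Defs
  imports "HOL-Analysis.Analysis"
begin

text \<open>A t-definer: a binary operation on [0,oo), given as a real function
  whose behaviour is only constrained on nonnegative arguments.\<close>
definition t_definer :: "(real \<Rightarrow> real \<Rightarrow> real) \<Rightarrow> bool" where
  "t_definer s \<longleftrightarrow>
     (\<forall>a\<ge>0. \<forall>b\<ge>0. s a b \<ge> 0) \<and>
     (\<forall>a\<ge>0. \<forall>b\<ge>0. s a b = s b a) \<and>
     (\<forall>a\<ge>0. \<forall>b\<ge>0. \<forall>c\<ge>0. s a (s b c) = s (s a b) c) \<and>
     (\<forall>a\<ge>0. \<forall>b\<ge>0. \<forall>c\<ge>0. a \<le> b \<longrightarrow> s a c \<le> s b c) \<and>
     (\<forall>a\<ge>0. s a 0 = a) \<and>
     (\<forall>c\<ge>0. continuous_on {0..} (\<lambda>a. s a c))"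

definition star_metric :: "(real \<Rightarrow> real \<Rightarrow> real) \<Rightarrow> 'a set \<Rightarrow> ('a \<Rightarrow> 'a \<Rightarrow> real) \<Rightarrow> bool" where
  "star_metric s X d \<longleftrightarrow>
     (\<forall>x\<in>X. \<forall>y\<in>X. d x y \<ge> 0) \<and>
     (\<forall>x\<in>X. \<forall>y\<in>X. d x y = 0 \<longleftrightarrow> x = y) \<and>
     (\<forall>x\<in>X. \<forall>y\<in>X. d x y = d y x) \<and>
     (\<forall>x\<in>X. \<forall>y\<in>X. \<forall>z\<in>X. d x y \<le> s (d x z) (d z y))"

definition star_open :: "'a set \<Rightarrow> ('a \<Rightarrow> 'a \<Rightarrow> real) \<Rightarrow> 'a set \<Rightarrow> bool" where
  "star_open X d U \<longleftrightarrow> U \<subseteq> X \<and> (\<forall>a\<in>U. \<exists>r>0. {x\<in>X. d a x < r} \<subseteq> U)"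

definition star_dense :: "'a set \<Rightarrow> ('a \<Rightarrow> 'a \<Rightarrow> real) \<Rightarrow> 'a set \<Rightarrow> bool" where
  "star_dense X d M \<longleftrightarrow> M \<subseteq> X \<and> (\<forall>U. star_open X d U \<and> U \<noteq> {} \<longrightarrow> U \<inter> M \<noteq> {})"

definition star_totally_bounded :: "'a set \<Rightarrow> ('a \<Rightarrow> 'a \<Rightarrow> real) \<Rightarrow> bool" where
  "star_totally_bounded Y d \<longleftrightarrow>
     (\<forall>e>0. \<exists>F. finite F \<and> F \<subseteq> Y \<and> Y = (\<Union>x\<in>F. {y\<in>Y. d x y < e}))"

end

theory Submission
  imports Defs
begin

text \<open>Continuity of the t-definer at 0 yields a radius \<open>\<delta>\<close> with \<open>\<delta> \<star> \<delta> < \<epsilon>\<close>. Balls of X are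
  open, so every point of X is within \<open>\<delta>\<close> of the dense set M, and a \<open>\<delta>\<close>-net F of M is then an
  \<open>\<epsilon>\<close>-net of X: \<open>d f x \<le> d f m \<star> d m x \<le> \<delta> \<star> \<delta> < \<epsilon>\<close>.\<close>

lemma t_definer_commute: "t_definer s \<Longrightarrow> 0 \<le> a \<Longrightarrow> 0 \<le> b \<Longrightarrow> s a b = s b a"
  unfolding t_definer_def by meson

lemma t_definer_mono_left:
  assumes "t_definer s" "0 \<le> a" "a \<le> b" "0 \<le> c"
  shows "s a c \<le> s b c"
proof -
  have "\<forall>a\<ge>0. \<forall>b\<ge>0. \<forall>c\<ge>0. a \<le> b \<longrightarrow> s a c \<le> s b c"
    using assms(1) unfolding t_definer_def by meson
  then show ?thesis using assms(2-4) by simp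
qed

lemma t_definer_mono:
  assumes "t_definer s" "0 \<le> a" "a \<le> b" "0 \<le> c" "c \<le> e"
  shows "s a c \<le> s b e"
proof -
  have "0 \<le> b" "0 \<le> e" using assms by linarith+
  have "s a c \<le> s b c" using t_definer_mono_left[OF assms(1-4)] .
  also have "\<dots> = s c b" using t_definer_commute[OF assms(1) \<open>0 \<le> b\<close> assms(4)] .
  also have "\<dots> \<le> s e b" using t_definer_mono_left[OF assms(1,4,5) \<open>0 \<le> b\<close>] .
  also have "\<dots> = s b e" using t_definer_commute[OF assms(1) \<open>0 \<le> e\<close> \<open>0 \<le> b\<close>] .
  finally show ?thesis .
qed

lemma t_definer_zero_right: "t_definer s \<Longrightarrow> 0 \<le> a \<Longrightarrow> s a 0 = a"
  unfolding t_definer_def by meson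

lemma t_definer_zero_left: "t_definer s \<Longrightarrow> 0 \<le> c \<Longrightarrow> s 0 c = c"
  using t_definer_commute t_definer_zero_right by fastforce

lemma t_definer_small_left:
  assumes "t_definer s" "0 \<le> c" "\<epsilon> > 0"
  obtains r where "r > 0" "\<And>a. 0 \<le> a \<Longrightarrow> a < r \<Longrightarrow> s a c < c + \<epsilon>"
proof -
  have "continuous_on {0..} (\<lambda>a. s a c)"
    using assms(1,2) unfolding t_definer_def by meson
  then obtain r where "r > 0" and r: "\<And>a. a \<in> {0..} \<Longrightarrow> dist a 0 < r \<Longrightarrow> dist (s a c) (s 0 c) < \<epsilon>"
    using assms(3) unfolding continuous_on_iff by (metis atLeast_iff order_refl)
  moreover have "s a c < c + \<epsilon>" if "0 \<le> a" "a < r" for a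
    using r[of a] that t_definer_zero_left[OF assms(1,2)] by (simp add: dist_real_def)
  ultimately show ?thesis using that by blast
qed

lemma t_definer_small_square:
  assumes "t_definer s" "\<epsilon> > 0"
  obtains \<delta> where "\<delta> > 0" "s \<delta> \<delta> < \<epsilon>"
proof -
  obtain r where "r > 0" and r: "\<And>a. 0 \<le> a \<Longrightarrow> a < r \<Longrightarrow> s a (\<epsilon>/2) < \<epsilon>/2 + \<epsilon>/2"
    using t_definer_small_left[OF assms(1), of "\<epsilon>/2" "\<epsilon>/2"] assms(2) by auto
  define \<delta> where "\<delta> = min (r/2) (\<epsilon>/2)"
  have "\<delta> > 0" using \<open>r > 0\<close> assms(2) by (simp add: \<delta>_def)
  have "s \<delta> \<delta> \<le> s \<delta> (\<epsilon>/2)"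
    using \<open>\<delta> > 0\<close> by (intro t_definer_mono[OF assms(1)]) (auto simp: \<delta>_def)
  also have "\<dots> < \<epsilon>" using r[of \<delta>] \<open>\<delta> > 0\<close> \<open>r > 0\<close> by (simp add: \<delta>_def)
  finally show ?thesis using that \<open>\<delta> > 0\<close> by blast
qed

lemma star_metric_nonneg: "star_metric s X d \<Longrightarrow> x \<in> X \<Longrightarrow> y \<in> X \<Longrightarrow> 0 \<le> d x y"
  unfolding star_metric_def by meson

lemma star_metric_self: "star_metric s X d \<Longrightarrow> x \<in> X \<Longrightarrow> d x x = 0"
  unfolding star_metric_def by simp

lemma star_metric_commute: "star_metric s X d \<Longrightarrow> x \<in> X \<Longrightarrow> y \<in> X \<Longrightarrow> d x y = d y x"
  unfolding star_metric_def by meson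

lemma star_metric_triangle:
  "star_metric s X d \<Longrightarrow> x \<in> X \<Longrightarrow> y \<in> X \<Longrightarrow> z \<in> X \<Longrightarrow> d x y \<le> s (d x z) (d z y)"
  unfolding star_metric_def by meson

lemma star_metric_triangle_le:
  assumes "t_definer s" "star_metric s X d" "x \<in> X" "y \<in> X" "z \<in> X"
    and "d x z \<le> a" "d z y \<le> b"
  shows "d x y \<le> s a b"
  using star_metric_triangle[OF assms(2-5)] t_definer_mono[OF assms(1), of "d x z" a "d z y" b]
    star_metric_nonneg[OF assms(2)] assms by fastforce

lemma star_open_ball:
  assumes "t_definer s" "star_metric s X d" "x \<in> X"
  shows "star_open X d {y \<in> X. d x y < \<delta>}"
  unfolding star_open_def
proof (intro conjI ballI)
  fix y assume "y \<in> {y \<in> X. d x y < \<delta>}"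
  then have "y \<in> X" "d x y < \<delta>" by auto
  have "0 \<le> d x y" using star_metric_nonneg[OF assms(2,3) \<open>y \<in> X\<close>] .
  obtain r where "r > 0" and r: "\<And>a. 0 \<le> a \<Longrightarrow> a < r \<Longrightarrow> s a (d x y) < d x y + (\<delta> - d x y)"
    using t_definer_small_left[OF assms(1) \<open>0 \<le> d x y\<close>, of "\<delta> - d x y"] \<open>d x y < \<delta>\<close> by auto
  have "d x z < \<delta>" if "z \<in> X" "d y z < r" for z
  proof -
    have "0 \<le> d y z" using star_metric_nonneg[OF assms(2) \<open>y \<in> X\<close> \<open>z \<in> X\<close>] .
    have "d x z \<le> s (d x y) (d y z)"
      using star_metric_triangle[OF assms(2,3) \<open>z \<in> X\<close> \<open>y \<in> X\<close>] .
    also have "\<dots> = s (d y z) (d x y)"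
      using t_definer_commute[OF assms(1) \<open>0 \<le> d x y\<close> \<open>0 \<le> d y z\<close>] .
    also have "\<dots> < \<delta>" using r[OF \<open>0 \<le> d y z\<close> \<open>d y z < r\<close>] by simp
    finally show ?thesis .
  qed
  then show "\<exists>r>0. {z \<in> X. d y z < r} \<subseteq> {y \<in> X. d x y < \<delta>}"
    using \<open>r > 0\<close> by blast
qed auto

lemma star_dense_near:
  assumes "t_definer s" "star_metric s X d" "star_dense X d M" "x \<in> X" "\<delta> > 0"
  obtains m where "m \<in> M" "d x m < \<delta>"
proof -
  have "x \<in> {y \<in> X. d x y < \<delta>}" using star_metric_self[OF assms(2,4)] assms(4,5) by simp
  then have "{y \<in> X. d x y < \<delta>} \<inter> M \<noteq> {}"
    using assms(3) star_open_ball[OF assms(1,2,4)] unfolding star_dense_def by blast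
  then show ?thesis using that by blast
qed

theorem corollary3p6:
  fixes s :: "real \<Rightarrow> real \<Rightarrow> real" and X M :: "'a set" and d :: "'a \<Rightarrow> 'a \<Rightarrow> real"
  assumes "X \<noteq> {}"
    and "t_definer s"
    and "star_metric s X d"
    and "star_dense X d M"
    and "star_totally_bounded M d"
  shows "star_totally_bounded X d"
  unfolding star_totally_bounded_def
proof (intro allI impI)
  fix \<epsilon> :: real assume "\<epsilon> > 0"
  obtain \<delta> where "\<delta> > 0" "s \<delta> \<delta> < \<epsilon>" using t_definer_small_square[OF assms(2) \<open>\<epsilon> > 0\<close>] .
  obtain F where "finite F" "F \<subseteq> M" and net: "M = (\<Union>f\<in>F. {m \<in> M. d f m < \<delta>})"
    using assms(5) \<open>\<delta> > 0\<close> unfolding star_totally_bounded_def by auto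
  have "M \<subseteq> X" using assms(4) unfolding star_dense_def by blast
  have "\<exists>f\<in>F. d f x < \<epsilon>" if "x \<in> X" for x
  proof -
    obtain m where "m \<in> M" "d x m < \<delta>" using star_dense_near[OF assms(2-4) \<open>x \<in> X\<close> \<open>\<delta> > 0\<close>] .
    then obtain f where "f \<in> F" "d f m < \<delta>" using net by blast
    have "m \<in> X" "f \<in> X" using \<open>m \<in> M\<close> \<open>f \<in> F\<close> \<open>F \<subseteq> M\<close> \<open>M \<subseteq> X\<close> by auto
    have "d m x < \<delta>" using \<open>d x m < \<delta>\<close> star_metric_commute[OF assms(3) \<open>x \<in> X\<close> \<open>m \<in> X\<close>] by simp
    have "d f x \<le> s \<delta> \<delta>"
      using \<open>d f m < \<delta>\<close> \<open>d m x < \<delta>\<close>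
      by (intro star_metric_triangle_le[OF assms(2,3) \<open>f \<in> X\<close> \<open>x \<in> X\<close> \<open>m \<in> X\<close>]) auto
    then have "d f x < \<epsilon>" using \<open>s \<delta> \<delta> < \<epsilon>\<close> by linarith
    then show ?thesis using \<open>f \<in> F\<close> by blast
  qed
  then have "X = (\<Union>f\<in>F. {x \<in> X. d f x < \<epsilon>})" by blast
  moreover have "F \<subseteq> X" using \<open>F \<subseteq> M\<close> \<open>M \<subseteq> X\<close> by (rule subset_trans)
  ultimately show "\<exists>F. finite F \<and> F \<subseteq> X \<and> X = (\<Union>x\<in>F. {y \<in> X. d x y < \<epsilon>})"
    using \<open>finite F\<close> by blast
qed

end
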